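(* The bi-immune symmetric group $G_{\mathfrak{B}}$ is closed in $(\mathrm{Sym}(\mathbb{N}), d)$ if and only if $G_{\mathfrak{B}} = \mathrm{Sym}(\mathbb{N})$.
   Context: $\mathbb{N}$ denotes the non-negative integers, and $\mathrm{Sym}(\mathbb{N})$ the group of all permutations of $\mathbb{N}$ under composition ($g \circ f$ means apply $f$ first). For $\sigma, \tau \in \mathrm{Sym}(\mathbb{N})$ let $\rho(\sigma,\tau) = 0$ if $\sigma = \tau$, and otherwise $\rho(\sigma,\tau) = 2^{-j}$ where $j$ is the least $i$ with $\sigma(i) \neq \tau(i)$; set $d(\sigma,\tau) = \max\{\rho(\sigma,\tau), \rho(\sigma^{-1},\tau^{-1})\}$, a complete metric inducing the pointwise convergence topology. For $i \in \mathbb{N}$, $\sigma_{(i)}$ is the permutation swapping $i$ and $i+1$ and fixing all other numbers. For $A \subseteq \mathbb{N}$ with increasing enumeration $a_0 < a_1 < \cdots$, define $\sigma_A(x) = \lim_{n \to \infty} (\sigma_{(a_0)} \circ \sigma_{(a_1)} \circ \cdots \circ \sigma_{(a_n)})(x)$ (eventually constant for each $x$). A set $A$ is immune if it is infinite and contains no infinite computably enumerable subset; $A$ is bi-immune if both $A$ and $\mathbb{N} - A$ are immune. For bi-immune $A$, $\sigma_A$ is a permutation of $\mathbb{N}$. The bi-immune symmetric group $G_{\mathfrak{B}}$ is the subgroup of $\mathrm{Sym}(\mathbb{N})$ generated by $\{\sigma_A : A \text{ bi-immune}\}$. *)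

theory Defs
  imports "HOL-Analysis.Analysis" "HOL-Algebra.Bij" "HOL-Algebra.Generated_Groups"
    "HOL-Library.Infinite_Set"
begin

text \<open>Partial functions of arity n are modelled as nat list => nat option; only their
values on lists of length n matter.\<close>

fun prec :: "(nat list \<Rightarrow> nat option) \<Rightarrow> (nat list \<Rightarrow> nat option) \<Rightarrow> nat list \<Rightarrow> nat option" where
  "prec f g [] = None"
| "prec f g (0 # xs) = f xs"
| "prec f g (Suc k # xs) =
     (case prec f g (k # xs) of None \<Rightarrow> None | Some r \<Rightarrow> g (k # r # xs))"

inductive partrec :: "nat \<Rightarrow> (nat list \<Rightarrow> nat option) \<Rightarrow> bool" where
  pr_zero: "partrec n (\<lambda>xs. Some 0)"
| pr_succ: "partrec 1 (\<lambda>xs. Some (Suc (xs ! 0)))"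
| pr_proj: "i < n \<Longrightarrow> partrec n (\<lambda>xs. Some (xs ! i))"
| pr_comp: "partrec m f \<Longrightarrow> length gs = m \<Longrightarrow> (\<forall>g\<in>set gs. partrec n g) \<Longrightarrow>
     partrec n (\<lambda>xs. if (\<forall>g\<in>set gs. g xs \<noteq> None)
                      then f (map (\<lambda>g. the (g xs)) gs) else None)"
| pr_prec: "partrec n f \<Longrightarrow> partrec (n + 2) g \<Longrightarrow> partrec (n + 1) (prec f g)"
| pr_mu: "partrec (n + 1) f \<Longrightarrow>
     partrec n (\<lambda>xs. if (\<exists>k. f (k # xs) = Some 0 \<and> (\<forall>j<k. f (j # xs) \<noteq> None))
                      then Some (LEAST k. f (k # xs) = Some 0 \<and> (\<forall>j<k. f (j # xs) \<noteq> None))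
                      else None)"

definition ce :: "nat set \<Rightarrow> bool" where
  "ce A \<longleftrightarrow> (\<exists>f. partrec 1 f \<and> A = {x. f [x] \<noteq> None})"

definition immune :: "nat set \<Rightarrow> bool" where
  "immune A \<longleftrightarrow> infinite A \<and> \<not> (\<exists>B. B \<subseteq> A \<and> infinite B \<and> ce B)"

definition bi_immune :: "nat set \<Rightarrow> bool" where
  "bi_immune A \<longleftrightarrow> immune A \<and> immune (UNIV - A)"

definition adj_swap :: "nat \<Rightarrow> nat \<Rightarrow> nat" where
  "adj_swap i x = (if x = i then i + 1 else if x = i + 1 then i else x)"

definition partial_sigma :: "nat set \<Rightarrow> nat \<Rightarrow> nat \<Rightarrow> nat" where
  "partial_sigma A n = foldr (\<circ>) (map (\<lambda>k. adj_swap (Infinite_Set.enumerate A k)) [0..<Suc n]) id"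

definition sigma_set :: "nat set \<Rightarrow> nat \<Rightarrow> nat" where
  "sigma_set A x = (THE y. \<exists>N. \<forall>n\<ge>N. partial_sigma A n x = y)"

definition SymN :: "(nat \<Rightarrow> nat) set" where
  "SymN = {f. bij f}"

definition rho :: "(nat \<Rightarrow> nat) \<Rightarrow> (nat \<Rightarrow> nat) \<Rightarrow> real" where
  "rho s t = (if s = t then 0 else (1/2) ^ (LEAST i. s i \<noteq> t i))"

definition dSym :: "(nat \<Rightarrow> nat) \<Rightarrow> (nat \<Rightarrow> nat) \<Rightarrow> real" where
  "dSym s t = max (rho s t) (rho (Hilbert_Choice.inv s) (Hilbert_Choice.inv t))"

definition G_B :: "(nat \<Rightarrow> nat) set" where
  "G_B = generate (BijGroup (UNIV :: nat set)) {sigma_set A | A. bi_immune A}"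

end

theory Submission
  imports Defs
begin

text \<open>There are only countably many c.e. sets, so some set A meets every infinite c.e. set in
  infinitely many points both inside and outside A; such a set is bi-immune, and so is every finite
  modification of it. Taking A with least element i and A - {i} both of this kind, the identity
  sigma_A = sigma_(i) o sigma_(A - {i}) puts every adjacent transposition, hence every
  transposition, into G_B. Composing transpositions, every permutation can be matched on any finite
  set of points by an element of G_B, so G_B is dense in Sym(N); a closed dense subset is
  everything, while Sym(N) itself is trivially closed.\<close>

lemma adj_swap_eq_transpose: "adj_swap i = Transposition.transpose i (Suc i)"
  by (auto simp: adj_swap_def Transposition.transpose_def)

lemma bij_adj_swap: "bij (adj_swap i)"
  by (simp add: adj_swap_eq_transpose)

lemma adj_swap_fixes_below: "x < i \<Longrightarrow> adj_swap i x = x"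
  by (simp add: adj_swap_def)

lemma foldr_comp_eq_comp: "foldr (\<circ>) fs g = foldr (\<circ>) fs id \<circ> g"
  by (induction fs) (auto simp: comp_assoc)

lemma partial_sigma_0: "partial_sigma A 0 = adj_swap (enumerate A 0)"
  by (simp add: partial_sigma_def)

lemma partial_sigma_Suc:
  "partial_sigma A (Suc n) = partial_sigma A n \<circ> adj_swap (enumerate A (Suc n))"
  unfolding partial_sigma_def
  by (subst upt_Suc) (simp add: foldr_append del: upt_Suc, subst foldr_comp_eq_comp, simp)

lemma partial_sigma_Suc_left:
  "partial_sigma A (Suc n) = adj_swap (enumerate A 0) \<circ> partial_sigma (A - {enumerate A 0}) n"
proof (induction n)
  case 0
  show ?case by (simp add: partial_sigma_Suc partial_sigma_0 enumerate_Suc')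
next
  case (Suc n)
  then show ?case
    by (simp add: partial_sigma_Suc[of A "Suc n"] partial_sigma_Suc[of "A - {enumerate A 0}" n]
        enumerate_Suc' comp_assoc)
qed

lemma inj_partial_sigma: "inj (partial_sigma A n)"
proof (induction n)
  case (Suc n)
  then show ?case unfolding partial_sigma_Suc by (intro inj_compose bij_adj_swap[THEN bij_is_inj])
qed (simp add: partial_sigma_0 bij_adj_swap bij_is_inj)

text \<open>The factors with index above x move only points above x, since the k-th element of an
  infinite set is at least k.\<close>
lemma partial_sigma_stable:
  assumes "infinite A" "x \<le> n"
  shows "partial_sigma A n x = partial_sigma A x x"
  using assms(2)
proof (induction n rule: dec_induct)
  case (step n)
  then have "x < enumerate A (Suc n)"
    using le_enumerate[OF assms(1), of "Suc n"] by linarith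
  with step show ?case by (simp add: partial_sigma_Suc adj_swap_fixes_below)
qed simp

lemma sigma_set_eq_partial_sigma:
  assumes "infinite A" "x \<le> n"
  shows "sigma_set A x = partial_sigma A n x"
proof -
  have "sigma_set A x = partial_sigma A x x"
    unfolding sigma_set_def
  proof (rule the_equality)
    show "\<exists>N. \<forall>n\<ge>N. partial_sigma A n x = partial_sigma A x x"
      using partial_sigma_stable[OF assms(1)] by blast
  next
    fix y assume "\<exists>N. \<forall>n\<ge>N. partial_sigma A n x = y"
    then obtain N where "\<forall>n\<ge>N. partial_sigma A n x = y" by blast
    then show "y = partial_sigma A x x"
      using partial_sigma_stable[OF assms(1), of x "max N x"] by simp
  qed
  then show ?thesis using partial_sigma_stable[OF assms] by simp
qed

lemma partial_sigma_atMost: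
  assumes "infinite A" "m \<notin> A" "x \<le> m"
  shows "partial_sigma A n x \<le> m"
  using assms(3)
proof (induction n arbitrary: x)
  case 0
  have "enumerate A 0 \<noteq> m" using enumerate_in_set[OF assms(1)] assms(2) by auto
  with 0 show ?case by (auto simp: partial_sigma_0 adj_swap_def)
next
  case (Suc n)
  have "enumerate A (Suc n) \<noteq> m" using enumerate_in_set[OF assms(1)] assms(2) by metis
  with Suc.prems have "adj_swap (enumerate A (Suc n)) x \<le> m" by (auto simp: adj_swap_def)
  then show ?case using Suc.IH by (simp add: partial_sigma_Suc)
qed

text \<open>A point m outside A is a barrier: sigma_A maps \<open>{..m}\<close> injectively into itself.\<close>
lemma bij_sigma_set:
  assumes "infinite A" "infinite (UNIV - A)"
  shows "bij (sigma_set A)"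
proof (rule bijI)
  show "inj (sigma_set A)"
  proof (rule injI)
    fix x y assume "sigma_set A x = sigma_set A y"
    then have "partial_sigma A (max x y) x = partial_sigma A (max x y) y"
      using sigma_set_eq_partial_sigma[OF assms(1), of _ "max x y"] by simp
    then show "x = y" using inj_partial_sigma injD by metis
  qed
  show "surj (sigma_set A)"
  proof -
    have "y \<in> range (sigma_set A)" for y
    proof -
      obtain m where m: "y \<le> m" "m \<notin> A"
        using assms(2) by (metis Diff_iff UNIV_I infinite_nat_iff_unbounded_le)
      have eq: "\<And>x. x \<in> {..m} \<Longrightarrow> sigma_set A x = partial_sigma A m x"
        using sigma_set_eq_partial_sigma[OF assms(1)] by simp
      have "sigma_set A ` {..m} \<subseteq> {..m}"
        using eq partial_sigma_atMost[OF assms(1) m(2)] by auto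
      moreover have "inj_on (sigma_set A) {..m}"
        using inj_on_cong[of "{..m}", OF eq] inj_partial_sigma[of A m, THEN inj_on_subset] by simp
      ultimately have "sigma_set A ` {..m} = {..m}" by (simp add: endo_inj_surj)
      then show ?thesis using m(1) by auto
    qed
    then show ?thesis by auto
  qed
qed

lemma sigma_set_eq_adj_swap_comp:
  assumes "infinite A"
  shows "sigma_set A = adj_swap (enumerate A 0) \<circ> sigma_set (A - {enumerate A 0})"
proof
  fix x
  have "infinite (A - {enumerate A 0})" using assms by simp
  then show "sigma_set A x = (adj_swap (enumerate A 0) \<circ> sigma_set (A - {enumerate A 0})) x"
    using sigma_set_eq_partial_sigma[OF assms, of x "Suc x"]
      sigma_set_eq_partial_sigma[of _ x x] by (simp add: partial_sigma_Suc_left)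
qed

lemma rho_nonneg: "0 \<le> rho s t"
  by (simp add: rho_def)

lemma rho_commute: "rho s t = rho t s"
  by (simp add: rho_def eq_commute)

lemma rho_eq_0_iff: "rho s t = 0 \<longleftrightarrow> s = t"
  by (simp add: rho_def)

lemma rho_ge_if_differ:
  assumes "s k \<noteq> t k"
  shows "(1/2) ^ k \<le> rho s t"
proof -
  have "(LEAST i. s i \<noteq> t i) \<le> k" using assms by (rule Least_le)
  with assms show ?thesis unfolding rho_def by (auto intro: power_decreasing)
qed

lemma rho_le_if_agree:
  assumes "\<And>i. i \<le> n \<Longrightarrow> s i = t i"
  shows "rho s t \<le> (1/2) ^ Suc n"
proof (cases "s = t")
  case False
  then obtain j where "s j \<noteq> t j" by auto
  then have "s (LEAST i. s i \<noteq> t i) \<noteq> t (LEAST i. s i \<noteq> t i)" by (rule LeastI)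
  then have "Suc n \<le> (LEAST i. s i \<noteq> t i)" using assms not_less_eq_eq by blast
  then have "(1/2::real) ^ (LEAST i. s i \<noteq> t i) \<le> (1/2) ^ Suc n" by (rule power_decreasing) auto
  with False show ?thesis unfolding rho_def by simp
qed (simp add: rho_def)

text \<open>rho is an ultrametric: at the first index where s and u differ, one of them differs from t.\<close>
lemma rho_triangle: "rho s u \<le> rho s t + rho t u"
proof (cases "s = u")
  case True
  then show ?thesis by (simp add: rho_def)
next
  case False
  define k where "k = (LEAST i. s i \<noteq> u i)"
  obtain j where "s j \<noteq> u j" using False by auto
  then have "s k \<noteq> u k" unfolding k_def by (rule LeastI)
  moreover have "rho s u = (1/2) ^ k" using False by (simp add: rho_def k_def)
  ultimately show ?thesis
    using rho_ge_if_differ[of s k t] rho_ge_if_differ[of t k u] rho_nonneg[of s t] rho_nonneg[of t u]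
    by (cases "s k = t k") linarith+
qed

lemma rho_le_dSym:
  "rho s t \<le> dSym s t" "rho (Hilbert_Choice.inv s) (Hilbert_Choice.inv t) \<le> dSym s t"
  by (simp_all add: dSym_def)

lemma Metric_space_SymN: "Metric_space SymN dSym"
proof
  fix x y z :: "nat \<Rightarrow> nat"
  let ?ix = "Hilbert_Choice.inv x" and ?iy = "Hilbert_Choice.inv y" and ?iz = "Hilbert_Choice.inv z"
  show "0 \<le> dSym x y" using rho_le_dSym(1)[of x y] rho_nonneg[of x y] by linarith
  show "dSym x y = dSym y x" by (simp add: dSym_def rho_commute)
  show "dSym x y = 0 \<longleftrightarrow> x = y"
  proof
    assume "dSym x y = 0"
    then have "rho x y = 0"
      using rho_le_dSym(1)[of x y] rho_nonneg[of x y] by linarith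
    then show "x = y" by (simp add: rho_eq_0_iff)
  qed (simp add: dSym_def rho_def)
  show "dSym x z \<le> dSym x y + dSym y z"
    using rho_triangle[of x z y] rho_triangle[of ?ix ?iz ?iy] rho_le_dSym[of x y] rho_le_dSym[of y z]
    unfolding dSym_def[of x z] by linarith
qed

lemma dSym_le_if_agree:
  assumes "\<And>i. i \<le> n \<Longrightarrow> s i = t i"
    and "\<And>i. i \<le> n \<Longrightarrow> Hilbert_Choice.inv s i = Hilbert_Choice.inv t i"
  shows "dSym s t \<le> (1/2) ^ Suc n"
  unfolding dSym_def using rho_le_if_agree[OF assms(1)] rho_le_if_agree[OF assms(2)]
  by (rule max.boundedI)

datatype pr_code = Zero | Succ | Proj nat | Comp pr_code "pr_code list" | Prec pr_code pr_code | Mu pr_code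

instance pr_code :: countable
  by countable_datatype

text \<open>Codes mirror the clauses of partrec; as they form a countable type, there are only countably
  many c.e. sets.\<close>
fun eval_code :: "pr_code \<Rightarrow> nat list \<Rightarrow> nat option" where
  "eval_code Zero = (\<lambda>xs. Some 0)"
| "eval_code Succ = (\<lambda>xs. Some (Suc (xs ! 0)))"
| "eval_code (Proj i) = (\<lambda>xs. Some (xs ! i))"
| "eval_code (Comp c cs) = (\<lambda>xs. if (\<forall>g\<in>set (map eval_code cs). g xs \<noteq> None)
     then eval_code c (map (\<lambda>g. the (g xs)) (map eval_code cs)) else None)"
| "eval_code (Prec c d) = prec (eval_code c) (eval_code d)"
| "eval_code (Mu c) = (\<lambda>xs. if (\<exists>k. eval_code c (k # xs) = Some 0 \<and> (\<forall>j<k. eval_code c (j # xs) \<noteq> None))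
     then Some (LEAST k. eval_code c (k # xs) = Some 0 \<and> (\<forall>j<k. eval_code c (j # xs) \<noteq> None))
     else None)"

lemma partrec_imp_eval_code: "partrec n f \<Longrightarrow> \<exists>c. f = eval_code c"
proof (induction rule: partrec.induct)
  case pr_zero
  show ?case by (intro exI[of _ Zero]) simp
next
  case pr_succ
  show ?case by (intro exI[of _ Succ]) simp
next
  case (pr_proj i n)
  show ?case by (intro exI[of _ "Proj i"]) simp
next
  case (pr_comp m f gs n)
  obtain c where c: "f = eval_code c" using pr_comp.IH(1) by blast
  have "\<exists>cs. gs = map eval_code cs"
    unfolding ex_map_conv using pr_comp.IH(2) by blast
  then obtain cs where cs: "gs = map eval_code cs" ..
  show ?case unfolding c cs by (intro exI[of _ "Comp c cs"]) simp
next
  case (pr_prec n f g)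
  then obtain c d where "f = eval_code c" "g = eval_code d" by blast
  then show ?case by (intro exI[of _ "Prec c d"]) simp
next
  case (pr_mu n f)
  then obtain c where c: "f = eval_code c" by blast
  show ?case unfolding c by (intro exI[of _ "Mu c"]) simp
qed

lemma countable_ce: "countable {B. ce B}"
proof (rule countable_subset)
  show "{B. ce B} \<subseteq> range (\<lambda>c. {x. eval_code c [x] \<noteq> None})"
    unfolding ce_def using partrec_imp_eval_code by blast
qed simp

lemma ce_UNIV: "ce UNIV"
  unfolding ce_def using partrec.pr_zero by fastforce

lemma inj_choice_from_infinite:
  fixes h :: "nat \<Rightarrow> 'a set"
  assumes "\<And>k. infinite (h k)"
  shows "\<exists>z. inj z \<and> (\<forall>k. z k \<in> h k)"
proof -
  have "\<exists>z. \<forall>k. z k \<in> h k \<and> (\<forall>j<k. z k \<noteq> z j)"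
  proof (rule dependent_wellorder_choice)
    fix k and z :: "nat \<Rightarrow> 'a"
    have "infinite (h k - z ` {..<k})" using assms by simp
    then obtain r where "r \<in> h k - z ` {..<k}" using infinite_imp_nonempty by blast
    then show "\<exists>r. r \<in> h k \<and> (\<forall>j<k. r \<noteq> z j)" by blast
  qed simp
  then obtain z where z: "\<And>k. z k \<in> h k" "\<And>j k. j < k \<Longrightarrow> z k \<noteq> z j" by blast
  have "inj z" by (rule linorder_injI) (metis z(2))
  with z(1) show ?thesis by blast
qed

text \<open>Enumerate F so that every member occurs at infinitely many pairs of positions 2m, 2m+1, and
  choose distinct points along the enumeration; the points chosen at even positions split F.\<close>
lemma exists_splitting_set:
  fixes F :: "'a set set"
  assumes "countable F" "\<And>B. B \<in> F \<Longrightarrow> infinite B"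
  shows "\<exists>A. \<forall>B\<in>F. infinite (B \<inter> A) \<and> infinite (B - A)"
proof (cases "F = {}")
  case False
  define h where "h k = from_nat_into F (fst (prod_decode (k div 2)))" for k
  have "infinite (h k)" for k
    unfolding h_def using assms(2) from_nat_into[OF False] by blast
  then obtain z where z: "inj z" "\<And>k. z k \<in> h k" using inj_choice_from_infinite by blast
  define A where "A = z ` {k. even k}"
  have "infinite (B \<inter> A) \<and> infinite (B - A)" if B: "B \<in> F" for B
  proof -
    obtain i where i: "B = from_nat_into F i" using from_nat_into_surj[OF assms(1) B] by blast
    define e where "e t = 2 * prod_encode (i, t)" for t
    have inj_e: "inj e" "inj (Suc \<circ> e)"
      unfolding e_def by (simp_all add: inj_on_def prod_encode_eq)
    have h_e: "h (e t) = B" "h (Suc (e t)) = B" for t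
      unfolding h_def e_def i by simp_all
    have z_e: "z (e t) \<in> B" "z (Suc (e t)) \<in> B" for t
      using z(2) h_e by metis+
    have "range (z \<circ> e) \<subseteq> B \<inter> A"
      using z_e unfolding A_def e_def by auto
    moreover have "range (z \<circ> Suc \<circ> e) \<subseteq> B - A"
      using z_e z(1) unfolding A_def e_def by (auto simp: inj_eq)
    moreover have "infinite (range (z \<circ> e))" "infinite (range (z \<circ> Suc \<circ> e))"
      using inj_e z(1) by (metis range_inj_infinite inj_compose comp_assoc)+
    ultimately show ?thesis by (meson finite_subset)
  qed
  then show ?thesis by blast
qed simp

definition splits_ce :: "nat set \<Rightarrow> bool" where
  "splits_ce A \<longleftrightarrow> (\<forall>B. infinite B \<and> ce B \<longrightarrow> infinite (B \<inter> A) \<and> infinite (B - A))"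

lemma exists_splits_ce: "\<exists>A. splits_ce A"
proof -
  have "countable {B. infinite B \<and> ce B}"
    by (rule countable_subset[OF _ countable_ce]) blast
  then have "\<exists>A. \<forall>B\<in>{B. infinite B \<and> ce B}. infinite (B \<inter> A) \<and> infinite (B - A)"
    by (rule exists_splitting_set) blast
  then show ?thesis unfolding splits_ce_def by blast
qed

lemma splits_ce_finite_modification:
  assumes "splits_ce A" "finite (A - A')" "finite (A' - A)"
  shows "splits_ce A'"
  unfolding splits_ce_def
proof (intro allI impI)
  fix B assume "infinite B \<and> ce B"
  then have "infinite (B \<inter> A)" "infinite (B - A)" using assms(1) splits_ce_def by auto
  moreover have "B \<inter> A \<subseteq> (B \<inter> A') \<union> (A - A')" "B - A \<subseteq> (B - A') \<union> (A' - A)" by auto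
  ultimately show "infinite (B \<inter> A') \<and> infinite (B - A')"
    using assms(2,3) finite_subset by (metis finite_UnI)
qed

lemma bi_immune_if_splits_ce:
  assumes "splits_ce A"
  shows "bi_immune A"
proof -
  have "infinite A" "infinite (UNIV - A)"
    using assms ce_UNIV unfolding splits_ce_def by auto
  moreover have "\<not> B \<subseteq> A" "\<not> B \<subseteq> UNIV - A" if "infinite B" "ce B" for B
  proof -
    have "B - A \<noteq> {}" "B \<inter> A \<noteq> {}"
      using assms that unfolding splits_ce_def by (metis finite.emptyI)+
    then show "\<not> B \<subseteq> A" "\<not> B \<subseteq> UNIV - A" by auto
  qed
  ultimately show ?thesis
    unfolding bi_immune_def immune_def by blast
qed

lemma transpose_mem_if_adjacent_mem:
  fixes H :: "(nat \<Rightarrow> nat) set"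
  assumes id: "id \<in> H" and comp: "\<And>f g. f \<in> H \<Longrightarrow> g \<in> H \<Longrightarrow> f \<circ> g \<in> H"
    and adjacent: "\<And>i. Transposition.transpose i (Suc i) \<in> H"
  shows "Transposition.transpose a b \<in> H"
proof -
  have "Transposition.transpose a (a + d) \<in> H" for a d
  proof (induction d)
    case 0
    show ?case using id by (simp add: id_def)
  next
    case (Suc d)
    show ?case
    proof (cases "d = 0")
      case True
      then show ?thesis using adjacent by simp
    next
      case False
      have "Transposition.transpose (a + Suc d) (a + d) \<circ> Transposition.transpose (a + d) a
          \<circ> Transposition.transpose (a + Suc d) (a + d) = Transposition.transpose (a + Suc d) a"
        using False by (intro transpose_comp_triple) auto
      moreover have "Transposition.transpose (a + Suc d) (a + d) \<in> H"
        using adjacent[of "a + d"] by (simp add: transpose_commute)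
      moreover have "Transposition.transpose (a + d) a \<in> H"
        using Suc.IH by (simp add: transpose_commute)
      ultimately have "Transposition.transpose (a + Suc d) a \<in> H"
        using comp by metis
      then show ?thesis by (simp add: transpose_commute)
    qed
  qed
  from this[of a "b - a"] this[of b "a - b"] show ?thesis
    by (cases "a \<le> b") (simp_all add: transpose_commute)
qed

text \<open>Correct the value at each new point x by composing with the transposition of h x and g x.\<close>
lemma agrees_on_finite_if_transpositions_mem:
  assumes id: "id \<in> H" and comp: "\<And>f g. f \<in> H \<Longrightarrow> g \<in> H \<Longrightarrow> f \<circ> g \<in> H"
    and transp: "\<And>a b. Transposition.transpose a b \<in> H" and inj_H: "\<And>h. h \<in> H \<Longrightarrow> inj h"
    and "inj g" "finite F"
  shows "\<exists>h\<in>H. \<forall>x\<in>F. h x = g x"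
  using \<open>finite F\<close>
proof (induction F rule: finite_induct)
  case empty
  then show ?case using id by blast
next
  case (insert x F)
  then obtain h where h: "h \<in> H" "\<forall>y\<in>F. h y = g y" by blast
  define h' where "h' = Transposition.transpose (h x) (g x) \<circ> h"
  have "h' y = g y" if "y \<in> insert x F" for y
  proof (cases "y = x")
    case False
    then have "h y \<noteq> h x" "g y \<noteq> g x"
      using inj_H[OF h(1)] \<open>inj g\<close> by (auto dest: injD)
    with False that h(2) show ?thesis by (auto simp: h'_def transpose_def)
  qed (simp add: h'_def)
  moreover have "h' \<in> H" unfolding h'_def using comp transp h(1) by blast
  ultimately show ?case by blast
qed

lemma carrier_BijGroup_UNIV: "carrier (BijGroup UNIV) = {f. bij f}"
  by (auto simp: BijGroup_def Bij_def)

lemma mult_BijGroup_UNIV: "bij f \<Longrightarrow> bij g \<Longrightarrow> f \<otimes>\<^bsub>BijGroup UNIV\<^esub> g = f \<circ> g"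
  by (auto simp: BijGroup_def Bij_def compose_def)

lemma one_BijGroup_UNIV: "\<one>\<^bsub>BijGroup UNIV\<^esub> = id"
  by (auto simp: BijGroup_def)

lemma inv_BijGroup_UNIV: "bij f \<Longrightarrow> inv\<^bsub>BijGroup UNIV\<^esub> f = Hilbert_Choice.inv f"
  by (simp add: inv_BijGroup Bij_def restrict_UNIV)

lemma subgroup_G_B: "subgroup G_B (BijGroup UNIV)"
  unfolding G_B_def
proof (rule group.generate_is_subgroup[OF group_BijGroup])
  show "{sigma_set A |A. bi_immune A} \<subseteq> carrier (BijGroup UNIV)"
    unfolding carrier_BijGroup_UNIV bi_immune_def immune_def using bij_sigma_set by blast
qed

lemma G_B_subset_SymN: "G_B \<subseteq> SymN"
  using subgroup.subset[OF subgroup_G_B] unfolding carrier_BijGroup_UNIV SymN_def .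

lemma bij_if_mem_G_B: "h \<in> G_B \<Longrightarrow> bij h"
  using G_B_subset_SymN unfolding SymN_def by blast

lemma id_mem_G_B: "id \<in> G_B"
  using subgroup.one_closed[OF subgroup_G_B] by (simp add: one_BijGroup_UNIV)

lemma comp_mem_G_B:
  assumes "f \<in> G_B" "g \<in> G_B"
  shows "f \<circ> g \<in> G_B"
proof -
  have "f \<otimes>\<^bsub>BijGroup UNIV\<^esub> g = f \<circ> g"
    by (simp add: mult_BijGroup_UNIV bij_if_mem_G_B assms)
  with subgroup.m_closed[OF subgroup_G_B assms] show ?thesis by simp
qed

lemma inv_mem_G_B:
  assumes "f \<in> G_B"
  shows "Hilbert_Choice.inv f \<in> G_B"
proof -
  have "inv\<^bsub>BijGroup UNIV\<^esub> f = Hilbert_Choice.inv f"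
    by (simp add: inv_BijGroup_UNIV bij_if_mem_G_B assms)
  with subgroup.m_inv_closed[OF subgroup_G_B assms] show ?thesis by simp
qed

lemma sigma_set_mem_G_B: "bi_immune A \<Longrightarrow> sigma_set A \<in> G_B"
  unfolding G_B_def by (rule generate.incl) blast

text \<open>A finite modification of a splitting set gives A with least element i such that both A and
  A - {i} are bi-immune.\<close>
lemma adj_swap_mem_G_B: "adj_swap i \<in> G_B"
proof -
  obtain A0 where A0: "splits_ce A0" using exists_splits_ce by blast
  define A1 where "A1 = {a \<in> A0. i < a}"
  define A where "A = insert i A1"
  have "finite (A0 - A1)" "finite (A0 - A)"
    by (rule finite_subset[of _ "{..i}"], auto simp: A_def A1_def)+
  moreover have "finite (A1 - A0)" "finite (A - A0)"
    by (rule finite_subset[of _ "{i}"], auto simp: A_def A1_def)+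
  ultimately have "splits_ce A1" "splits_ce A"
    using splits_ce_finite_modification[OF A0] by blast+
  then have bi_A1: "bi_immune A1" and bi_A: "bi_immune A"
    using bi_immune_if_splits_ce by auto
  have inf_A: "infinite A" using bi_A unfolding bi_immune_def immune_def by blast
  have bij_A1: "bij (sigma_set A1)"
    using bi_A1 bij_sigma_set unfolding bi_immune_def immune_def by blast
  have "enumerate A 0 = i"
    unfolding enumerate_0 A_def A1_def by (rule Least_equality) auto
  moreover have "A - {i} = A1" unfolding A_def A1_def by auto
  ultimately have "sigma_set A = adj_swap i \<circ> sigma_set A1"
    using sigma_set_eq_adj_swap_comp[OF inf_A] by simp
  moreover have "sigma_set A1 \<circ> Hilbert_Choice.inv (sigma_set A1) = id"
    using bij_A1 by (simp add: fun_eq_iff bij_is_surj surj_f_inv_f)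
  ultimately have "adj_swap i = sigma_set A \<circ> Hilbert_Choice.inv (sigma_set A1)"
    by (simp add: comp_assoc)
  then show ?thesis
    using comp_mem_G_B[OF sigma_set_mem_G_B[OF bi_A] inv_mem_G_B[OF sigma_set_mem_G_B[OF bi_A1]]]
    by simp
qed

lemma transpose_mem_G_B: "Transposition.transpose a b \<in> G_B"
  using transpose_mem_if_adjacent_mem[OF id_mem_G_B comp_mem_G_B] adj_swap_mem_G_B
  by (simp add: adj_swap_eq_transpose)

lemma agrees_on_finite_G_B:
  assumes "bij g" "finite F"
  shows "\<exists>h\<in>G_B. \<forall>x\<in>F. h x = g x"
  by (rule agrees_on_finite_if_transpositions_mem[OF id_mem_G_B comp_mem_G_B transpose_mem_G_B
        bij_if_mem_G_B[THEN bij_is_inj] bij_is_inj[OF assms(1)] assms(2)])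

lemma G_B_dense:
  assumes "g \<in> SymN" "r > 0"
  shows "\<exists>h\<in>G_B. dSym g h < r"
proof -
  obtain n where n: "(1/2::real) ^ n < r" using real_arch_pow_inv[OF assms(2), of "1/2"] by auto
  have bij_g: "bij g" using assms(1) unfolding SymN_def by simp
  obtain h where h: "h \<in> G_B" "\<forall>x\<in>{..n} \<union> Hilbert_Choice.inv g ` {..n}. h x = g x"
    using agrees_on_finite_G_B[OF bij_g, of "{..n} \<union> Hilbert_Choice.inv g ` {..n}"] by auto
  have "g i = h i" if "i \<le> n" for i using h(2) that by simp
  moreover have "Hilbert_Choice.inv g i = Hilbert_Choice.inv h i" if "i \<le> n" for i
  proof -
    have "h (Hilbert_Choice.inv g i) = g (Hilbert_Choice.inv g i)" using h(2) that by simp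
    also have "\<dots> = i" using bij_g by (simp add: bij_is_surj surj_f_inv_f)
    finally have "h (Hilbert_Choice.inv g i) = i" .
    then have "Hilbert_Choice.inv h i = Hilbert_Choice.inv g i"
      by (rule inv_f_eq[OF bij_is_inj[OF bij_if_mem_G_B[OF h(1)]]])
    then show ?thesis by simp
  qed
  ultimately have "dSym g h \<le> (1/2) ^ Suc n" by (rule dSym_le_if_agree)
  also have "\<dots> \<le> (1/2) ^ n" by (rule power_decreasing) auto
  also note n
  finally show ?thesis using h(1) by blast
qed

theorem mainTheorem9:
  shows "closedin (Metric_space.mtopology SymN dSym) G_B \<longleftrightarrow> G_B = SymN"
proof
  assume closed: "closedin (Metric_space.mtopology SymN dSym) G_B"
  have "g \<in> G_B" if g: "g \<in> SymN" for g
  proof (rule ccontr)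
    assume "g \<notin> G_B"
    then obtain r where "r > 0" and disjoint: "disjnt G_B (Metric_space.mball SymN dSym g r)"
      using closed g unfolding Metric_space.closedin_metric[OF Metric_space_SymN] by blast
    then obtain h where "h \<in> G_B" "dSym g h < r"
      using G_B_dense[OF g] by blast
    moreover from this have "h \<in> Metric_space.mball SymN dSym g r"
      using g G_B_subset_SymN by (simp add: Metric_space.in_mball[OF Metric_space_SymN] subset_iff)
    ultimately show False using disjoint by (simp add: disjnt_iff)
  qed
  then show "G_B = SymN" using G_B_subset_SymN by blast
qed (metis closedin_topspace Metric_space.topspace_mtopology[OF Metric_space_SymN])

end
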